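(* Let $A_j$ be a symmetric $2N_j\times2N_j$ matrix with $\sigma(J_{2N_j}A_j)=\{\pm\beta_0 i\}$, $\beta_0>0$. Then $\mathrm{m}^-\big(T_1^{N_j}(\lambda A_j)\big)=2N_j$ for all $\lambda\in[0,1/\beta_0)$, and $\mathrm{m}^-\big(T_1^{N_j}(\lambda A_j)\big)=2\,\mathrm{m}^-(-A_j)$ for all $\lambda>1/\beta_0$.
   Context: $J_{2k}=\begin{pmatrix}0&I_k\\-I_k&0\end{pmatrix}$; $T_1^{k}(\lambda B)=\begin{pmatrix}-\lambda B&J_{2k}\\-J_{2k}&-\lambda B\end{pmatrix}$; $\mathrm{m}^-$ is the number of negative eigenvalues of a symmetric matrix. *)

theory Defs
  imports "Jordan_Normal_Form.Spectral_Radius"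
begin

definition J_mat :: "nat \<Rightarrow> real mat" where
  "J_mat k = four_block_mat (0\<^sub>m k k) (1\<^sub>m k) (- (1\<^sub>m k)) (0\<^sub>m k k)"

definition T1 :: "nat \<Rightarrow> real mat \<Rightarrow> real mat" where
  "T1 k B = four_block_mat (- B) (J_mat k) (- (J_mat k)) (- B)"

definition neg_index :: "real mat \<Rightarrow> nat" where
  "neg_index M = (\<Sum>x\<in>{x. x < 0 \<and> eigenvalue M x}. order x (char_poly M))"

end

theory Submission
  imports Defs "Jordan_Normal_Form.Schur_Decomposition"
begin

(* Write P = T1 N 0 = [[0, J], [-J, 0]] and Q = diag(-A, -A), so that T1 N (l A) = P + l Q is a
   symmetric affine family. A kernel vector (x, y) of P + l Q with l >= 0 forces
   (J A)^2 x = -(1/l)^2 x with x <> 0, so +-i/l is an eigenvalue of J A; hence the family is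
   nonsingular for every l >= 0 except l = 1/beta0, and so is Q + m P for 0 <= m < beta0
   (Q itself is nonsingular because 0 is not an eigenvalue of J A).
   On nonsingular symmetric matrices the number of negative eigenvalues is locally constant:
   the negative and positive eigenspaces of M0 remain definite for every M close to M0, and by
   Sylvester's argument a definite subspace of dimension k bounds the index of M from below
   (negative case) or from above (positive case). The index is therefore constant on the
   connected parameter sets [0, 1/beta0) and, after dividing by l, on [0, beta0).
   The end points are computed directly: P has the negative definite subspace {(a, J a)} and
   the positive definite subspace {(a, -J a)}, both of dimension 2N, and the index of the
   block diagonal matrix Q is twice that of -A. *)

lemma sum_indicator_mult:
  fixes f :: "nat \<Rightarrow> 'a :: comm_ring_1"
  assumes "c < m"
  shows "(\<Sum>i = 0..<m. (if i = c then 1 else 0) * f i) = f c"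
proof -
  have "(\<Sum>i = 0..<m. (if i = c then 1 else 0) * f i) = (\<Sum>i = 0..<m. if i = c then f i else 0)"
    by (rule sum.cong) auto
  thus ?thesis using assms by simp
qed

lemma diff_eq_zero_vec:
  fixes v w :: "'a :: ab_group_add vec"
  assumes "v \<in> carrier_vec n" and "w \<in> carrier_vec n" and "v - w = 0\<^sub>v n"
  shows "v = w"
proof (rule eq_vecI)
  fix i assume "i < dim_vec w"
  hence "(v - w) $ i = v $ i - w $ i" using assms(1,2) by auto
  thus "v $ i = w $ i" using arg_cong[OF assms(3), of "\<lambda>u. u $ i"] \<open>i < dim_vec w\<close> assms(2) by simp
qed (use assms in simp)

lemma smult_mat_mult_vec:
  "A \<in> carrier_mat n m \<Longrightarrow> v \<in> carrier_vec m \<Longrightarrow> (k \<cdot>\<^sub>m A) *\<^sub>v v = k \<cdot>\<^sub>v (A *\<^sub>v v)"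
  by (intro eq_vecI) (auto simp: scalar_prod_def sum_distrib_left mult.assoc)

lemma add_zero_smult_mat:
  "A \<in> carrier_mat n m \<Longrightarrow> B \<in> carrier_mat n m \<Longrightarrow> A + 0 \<cdot>\<^sub>m B = (A :: 'a :: semiring_0 mat)"
  by (intro eq_matI) auto

lemma add_smult_mat_rescale:
  fixes A B :: "'a :: field mat"
  assumes "A \<in> carrier_mat n m" "B \<in> carrier_mat n m" "l \<noteq> 0"
  shows "A + l \<cdot>\<^sub>m B = l \<cdot>\<^sub>m (B + (1 / l) \<cdot>\<^sub>m A)"
  using assms by (intro eq_matI) (auto simp: field_simps)

lemma transpose_add_smult_sym:
  assumes "P \<in> carrier_mat n n" "P\<^sup>T = P" "Q \<in> carrier_mat n n" "Q\<^sup>T = Q"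
  shows "(P + t \<cdot>\<^sub>m Q)\<^sup>T = P + t \<cdot>\<^sub>m (Q :: 'a :: comm_ring mat)"
proof -
  have "(t \<cdot>\<^sub>m Q)\<^sup>T = t \<cdot>\<^sub>m Q\<^sup>T" by (rule eq_matI) auto
  thus ?thesis using assms by (simp add: transpose_add)
qed

lemma nontrivial_kernel_wide_mat:
  fixes A :: "'a :: field mat"
  assumes A: "A \<in> carrier_mat m k" and mk: "m < k"
  obtains v where "v \<in> carrier_vec k" "v \<noteq> 0\<^sub>v k" "A *\<^sub>v v = 0\<^sub>v m"
proof -
  define B where "B = mat\<^sub>r k k (\<lambda>i. if i = k - 1 then 0\<^sub>v k else if i < m then row A i else 0\<^sub>v k)"
  have B: "B \<in> carrier_mat k k" unfolding B_def by simp
  have "det B = 0" unfolding B_def using mk A by (intro det_row_0) auto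
  then obtain v where v: "v \<in> carrier_vec k" "v \<noteq> 0\<^sub>v k" "B *\<^sub>v v = 0\<^sub>v k"
    using det_0_iff_vec_prod_zero_field[OF B] by auto
  have "A *\<^sub>v v = 0\<^sub>v m"
  proof (rule eq_vecI)
    fix i assume "i < dim_vec (0\<^sub>v m :: 'a vec)"
    hence i: "i < m" by simp
    have "row B i = row A i" unfolding B_def using i mk A by (auto intro!: eq_vecI)
    hence "(A *\<^sub>v v) $ i = (B *\<^sub>v v) $ i" using i mk A B by simp
    thus "(A *\<^sub>v v) $ i = 0\<^sub>v m $ i" using v(3) i mk by simp
  qed (use A in simp)
  with v show ?thesis by (intro that)
qed

definition coord_embedding :: "nat \<Rightarrow> nat list \<Rightarrow> 'a :: comm_ring_1 mat" where
  "coord_embedding n is = mat n (length is) (\<lambda>(i, j). if i = is ! j then 1 else 0)"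

lemma coord_embedding_carrier [simp]: "coord_embedding n is \<in> carrier_mat n (length is)"
  unfolding coord_embedding_def by simp

lemma transpose_coord_embedding_mult_vec:
  assumes "set is \<subseteq> {..<n}" and x: "x \<in> carrier_vec n" and j: "j < length is"
  shows "((coord_embedding n is)\<^sup>T *\<^sub>v x) $ j = x $ (is ! j)"
proof -
  have "is ! j < n" using subsetD[OF assms(1) nth_mem[OF j]] by simp
  thus ?thesis
    using x j sum_indicator_mult[of "is ! j" n "\<lambda>i. x $ i"]
    unfolding coord_embedding_def by (simp add: scalar_prod_def)
qed

lemma coord_embedding_mult_vec_nth:
  assumes "distinct is" and "set is \<subseteq> {..<n}" and a: "a \<in> carrier_vec (length is)"
    and j: "j < length is"
  shows "(coord_embedding n is *\<^sub>v a) $ (is ! j) = a $ j"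
proof -
  have "is ! j < n" using subsetD[OF assms(2) nth_mem[OF j]] by simp
  hence "(coord_embedding n is *\<^sub>v a) $ (is ! j) = (\<Sum>l = 0..<length is. (if l = j then 1 else 0) * a $ l)"
    using a j assms(1) unfolding coord_embedding_def
    by (auto simp: scalar_prod_def nth_eq_iff_index_eq intro!: sum.cong)
  thus ?thesis using sum_indicator_mult[OF j] by simp
qed

lemma coord_embedding_mult_vec_outside:
  assumes a: "a \<in> carrier_vec (length is)" and i: "i < n" "i \<notin> set is"
  shows "(coord_embedding n is *\<^sub>v a) $ i = 0"
proof -
  have "i \<noteq> is ! j" if "j < length is" for j using i(2) nth_mem[OF that] by auto
  thus ?thesis using a i(1) unfolding coord_embedding_def by (simp add: scalar_prod_def)
qed

lemma coord_embedding_left_inverse: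
  assumes "distinct is" and "set is \<subseteq> {..<n}" and a: "a \<in> carrier_vec (length is)"
  shows "(coord_embedding n is)\<^sup>T *\<^sub>v (coord_embedding n is *\<^sub>v a) = a"
proof (rule eq_vecI)
  fix j assume "j < dim_vec a"
  hence j: "j < length is" using a by simp
  have Ea: "coord_embedding n is *\<^sub>v a \<in> carrier_vec n"
    using mult_mat_vec_carrier[OF coord_embedding_carrier a] .
  show "((coord_embedding n is)\<^sup>T *\<^sub>v (coord_embedding n is *\<^sub>v a)) $ j = a $ j"
    using transpose_coord_embedding_mult_vec[OF assms(2) Ea j] coord_embedding_mult_vec_nth[OF assms j]
    by (rule trans)
qed (use a in \<open>simp add: coord_embedding_def\<close>)

section \<open>Orthogonal diagonalization of real symmetric matrices\<close>

definition spectral_decomp :: "nat \<Rightarrow> real mat \<Rightarrow> real mat \<Rightarrow> real mat \<Rightarrow> bool" where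
  "spectral_decomp n M U D \<longleftrightarrow> U \<in> carrier_mat n n \<and> U\<^sup>T * U = 1\<^sub>m n
     \<and> D \<in> carrier_mat n n \<and> diagonal_mat D \<and> M = U * D * U\<^sup>T"

lemma eigenvalue_real_symmetric_real:
  fixes M :: "real mat"
  assumes M: "M \<in> carrier_mat n n" and sym: "M\<^sup>T = M"
    and ev: "eigenvalue (map_mat complex_of_real M) e"
  shows "e = complex_of_real (Re e)"
proof -
  let ?Mc = "map_mat complex_of_real M"
  have Mc: "?Mc \<in> carrier_mat n n" using M by simp
  have symc: "?Mc\<^sup>T = ?Mc" by (simp add: map_mat_transpose sym)
  from ev obtain v where v: "v \<in> carrier_vec n" "v \<noteq> 0\<^sub>v n" "?Mc *\<^sub>v v = e \<cdot>\<^sub>v v"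
    unfolding eigenvalue_def eigenvector_def using Mc by auto
  have conj_Mv: "?Mc *\<^sub>v conjugate v = conjugate (?Mc *\<^sub>v v)"
    using M v(1) by (intro eq_vecI) (auto simp: scalar_prod_def sum_conjugate)
  have "e * (v \<bullet>c v) = (?Mc *\<^sub>v v) \<bullet>c v"
    using v by (simp add: smult_scalar_prod_distrib[of _ n])
  also have "\<dots> = v \<bullet> (?Mc *\<^sub>v conjugate v)"
    using transpose_vec_mult_scalar[OF Mc, of "conjugate v" v] symc v by simp
  also have "\<dots> = cnj e * (v \<bullet>c v)"
    unfolding conj_Mv v(3) using v by (simp add: conjugate_smult_vec scalar_prod_smult_distrib[of _ n])
  finally have "e * (v \<bullet>c v) = cnj e * (v \<bullet>c v)" .
  moreover have "v \<bullet>c v \<noteq> 0" using conjugate_square_greater_0_vec[OF v(1)] v(2) by force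
  ultimately have "cnj e = e" by simp
  thus ?thesis by (simp add: complex_eq_iff)
qed

lemma real_symmetric_unit_eigenvector:
  fixes M :: "real mat"
  assumes M: "M \<in> carrier_mat n n" and sym: "M\<^sup>T = M" and n: "n > 0"
  obtains e v where "v \<in> carrier_vec n" "v \<bullet> v = 1" "M *\<^sub>v v = e \<cdot>\<^sub>v v"
proof -
  let ?Mc = "map_mat complex_of_real M"
  have Mc: "?Mc \<in> carrier_mat n n" using M by simp
  from spectrum_non_empty[OF Mc n] obtain ec where ec: "eigenvalue ?Mc ec"
    unfolding spectrum_def by auto
  have "poly (map_poly complex_of_real (char_poly M)) (complex_of_real (Re ec)) = 0"
    using ec eigenvalue_real_symmetric_real[OF M sym ec] eigenvalue_root_char_poly[OF Mc]
    by (simp add: of_real_hom.char_poly_hom[OF M])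
  hence "eigenvalue M (Re ec)" using eigenvalue_root_char_poly[OF M] by simp
  then obtain w where w: "w \<in> carrier_vec n" "w \<noteq> 0\<^sub>v n" "M *\<^sub>v w = Re ec \<cdot>\<^sub>v w"
    unfolding eigenvalue_def eigenvector_def using M by auto
  have ww: "w \<bullet> w > 0" using conjugate_square_greater_0_vec[OF w(1)] w(2) by simp
  define v where "v = (1 / sqrt (w \<bullet> w)) \<cdot>\<^sub>v w"
  show ?thesis
  proof
    show "v \<in> carrier_vec n" unfolding v_def using w by simp
    show "v \<bullet> v = 1" unfolding v_def using w ww by (simp add: real_sqrt_mult[symmetric])
    show "M *\<^sub>v v = Re ec \<cdot>\<^sub>v v" unfolding v_def using w M
      by (auto simp: mult_mat_vec smult_smult_assoc mult.commute)
  qed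
qed

lemma orthonormal_completion:
  fixes v :: "real vec"
  assumes v: "v \<in> carrier_vec n" and v1: "v \<bullet> v = 1"
  obtains W where "W \<in> carrier_mat n n" "W\<^sup>T * W = 1\<^sub>m n" "col W 0 = v"
proof -
  have v0: "v \<noteq> 0\<^sub>v n" using v1 by auto
  have n: "n > 0" using v0 v by (cases n) auto
  interpret cof_vec_space n "TYPE(real)" .
  define b where "b = basis_completion v"
  from basis_completion[OF v v0, folded b_def]
  have b: "distinct b" "\<not> lin_dep (set b)" "set b \<subseteq> carrier_vec n" "hd b = v" "length b = n"
    by auto
  from b(4,5) n obtain vs where bv: "b = v # vs" by (cases b) auto
  define ws where "ws = gram_schmidt n b"
  from gram_schmidt_result[OF b(3,1,2) refl, folded ws_def]
  have ws: "set ws \<subseteq> carrier_vec n" "corthogonal ws" "length ws = n" by (auto simp: b(5))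
  have hd_ws: "hd ws = v" using gram_schmidt_hd[OF v, of vs] unfolding ws_def bv .
  have ws_nth: "ws ! i \<in> carrier_vec n" if "i < n" for i using ws that by auto
  have ws_orth: "ws ! i \<bullet> ws ! j = 0 \<longleftrightarrow> i \<noteq> j" if "i < n" "j < n" for i j
    using corthogonalD[OF ws(2), of i j] ws(3) that by simp
  have ws_pos: "ws ! i \<bullet> ws ! i > 0" if "i < n" for i
    using ws_orth[OF that that] conjugate_square_ge_0_vec[of "ws ! i"] by (auto simp: order_le_less)
  define us where "us = map (\<lambda>w. (1 / sqrt (w \<bullet> w)) \<cdot>\<^sub>v w) ws"
  have us: "length us = n" "\<And>i. i < n \<Longrightarrow> us ! i \<in> carrier_vec n"
    unfolding us_def using ws ws_nth by auto
  have us_orthonormal: "us ! i \<bullet> us ! j = (if i = j then 1 else 0)" if ij: "i < n" "j < n" for i j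
  proof -
    have "us ! i \<bullet> us ! j
        = 1 / sqrt (ws ! i \<bullet> ws ! i) * (1 / sqrt (ws ! j \<bullet> ws ! j)) * (ws ! i \<bullet> ws ! j)"
      unfolding us_def using ij ws(3) ws_nth[OF ij(1)] ws_nth[OF ij(2)] by simp
    thus ?thesis using ws_orth[OF ij] ws_pos[OF ij(1)] by (auto simp: real_sqrt_mult[symmetric])
  qed
  define W where "W = mat_of_cols n us"
  show ?thesis
  proof
    show W: "W \<in> carrier_mat n n" unfolding W_def using us by auto
    show "W\<^sup>T * W = 1\<^sub>m n"
      using W us us_orthonormal unfolding W_def by (intro eq_matI) (auto simp: col_mat_of_cols)
    have "us ! 0 = v" unfolding us_def using hd_ws ws(3) n v1 by (cases ws) auto
    thus "col W 0 = v" unfolding W_def using us n by (auto simp: col_mat_of_cols)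
  qed
qed

lemma spectral_decomp_four_block:
  assumes "spectral_decomp n1 M1 U1 D1" and "spectral_decomp n2 M2 U2 D2"
  shows "spectral_decomp (n1 + n2) (four_block_mat M1 (0\<^sub>m n1 n2) (0\<^sub>m n2 n1) M2)
    (four_block_mat U1 (0\<^sub>m n1 n2) (0\<^sub>m n2 n1) U2) (four_block_mat D1 (0\<^sub>m n1 n2) (0\<^sub>m n2 n1) D2)"
proof -
  have U: "U1 \<in> carrier_mat n1 n1" "U2 \<in> carrier_mat n2 n2"
    and D: "D1 \<in> carrier_mat n1 n1" "D2 \<in> carrier_mat n2 n2"
    using assms unfolding spectral_decomp_def by auto
  have block_mult: "four_block_mat A1 (0\<^sub>m n1 n2) (0\<^sub>m n2 n1) A2 * four_block_mat B1 (0\<^sub>m n1 n2) (0\<^sub>m n2 n1) B2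
      = four_block_mat (A1 * B1) (0\<^sub>m n1 n2) (0\<^sub>m n2 n1) (A2 * B2)"
    if "A1 \<in> carrier_mat n1 n1" "A2 \<in> carrier_mat n2 n2" "B1 \<in> carrier_mat n1 n1" "B2 \<in> carrier_mat n2 n2"
    for A1 A2 B1 B2 :: "real mat"
    using that by (subst mult_four_block_mat[OF that(1) _ _ that(2) that(3) _ _ that(4)]) auto
  have block_transpose: "(four_block_mat A1 (0\<^sub>m n1 n2) (0\<^sub>m n2 n1) A2)\<^sup>T
      = four_block_mat A1\<^sup>T (0\<^sub>m n1 n2) (0\<^sub>m n2 n1) A2\<^sup>T"
    if "A1 \<in> carrier_mat n1 n1" "A2 \<in> carrier_mat n2 n2" for A1 A2 :: "real mat"
    using that by (subst transpose_four_block_mat[OF that(1) _ _ that(2)]) auto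
  show ?thesis
    using assms U D unfolding spectral_decomp_def
    by (auto simp: block_mult block_transpose diagonal_mat_def)
qed

lemma spectral_decomp_orthogonal_conj:
  assumes MUD: "spectral_decomp n M U D"
    and W: "W \<in> carrier_mat n n" and WW: "W\<^sup>T * W = 1\<^sub>m n"
  shows "spectral_decomp n (W * M * W\<^sup>T) (W * U) D"
proof -
  have U: "U \<in> carrier_mat n n" "U\<^sup>T * U = 1\<^sub>m n" and D: "D \<in> carrier_mat n n"
    and M: "M = U * D * U\<^sup>T"
    using MUD unfolding spectral_decomp_def by auto
  have WU_T: "(W * U)\<^sup>T = U\<^sup>T * W\<^sup>T" using transpose_mult[OF W U(1)] .
  have "(W * U)\<^sup>T * (W * U) = U\<^sup>T * (W\<^sup>T * W) * U"
    unfolding WU_T using W U by (simp add: assoc_mult_mat[of _ n n _ n _ n])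
  also have "\<dots> = 1\<^sub>m n" using U WW by simp
  finally have "(W * U)\<^sup>T * (W * U) = 1\<^sub>m n" .
  moreover have "W * M * W\<^sup>T = (W * U) * D * (W * U)\<^sup>T"
    unfolding WU_T M using W U D by (simp add: assoc_mult_mat[of _ n n _ n _ n])
  ultimately show ?thesis using MUD W unfolding spectral_decomp_def by auto
qed

lemma orthogonal_deflation:
  fixes M W :: "real mat"
  assumes M: "M \<in> carrier_mat (Suc n) (Suc n)" and sym: "M\<^sup>T = M"
    and W: "W \<in> carrier_mat (Suc n) (Suc n)" and WW: "W\<^sup>T * W = 1\<^sub>m (Suc n)"
    and eig: "M *\<^sub>v col W 0 = e \<cdot>\<^sub>v col W 0"
  obtains M' where "M' \<in> carrier_mat n n" "M'\<^sup>T = M'"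
    "W\<^sup>T * M * W = four_block_mat (mat 1 1 (\<lambda>_. e)) (0\<^sub>m 1 n) (0\<^sub>m n 1) M'"
proof -
  define K where "K = W\<^sup>T * M * W"
  have K: "K \<in> carrier_mat (Suc n) (Suc n)" unfolding K_def using W M by auto
  have K_sym: "K\<^sup>T = K"
  proof -
    have "K\<^sup>T = W\<^sup>T * (W\<^sup>T * M)\<^sup>T"
      unfolding K_def using W M by (intro transpose_mult[of _ "Suc n" "Suc n"]) auto
    also have "(W\<^sup>T * M)\<^sup>T = M\<^sup>T * W" using W M by (subst transpose_mult[of _ "Suc n" "Suc n"]) auto
    finally show ?thesis unfolding K_def sym using W M by simp
  qed
  have K_col0: "K $$ (i, 0) = (if i = 0 then e else 0)" if i: "i < Suc n" for i
  proof -
    have "K = W\<^sup>T * (M * W)"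
      unfolding K_def using W M by (simp add: assoc_mult_mat[of _ "Suc n" "Suc n" _ "Suc n" _ "Suc n"])
    moreover have "col (M * W) 0 = M *\<^sub>v col W 0" using W M by (simp add: mult_mat_vec_def)
    ultimately have "K $$ (i, 0) = row W\<^sup>T i \<bullet> (M *\<^sub>v col W 0)" using i W M by simp
    also have "\<dots> = e * (W\<^sup>T * W) $$ (i, 0)" unfolding eig using W i by simp
    finally show ?thesis unfolding WW using i by simp
  qed
  have K_row0: "K $$ (0, j) = (if j = 0 then e else 0)" if "j < Suc n" for j
    using arg_cong[OF K_sym, of "\<lambda>X. X $$ (j, 0)"] K_col0[OF that] K that by auto
  define M' where "M' = mat n n (\<lambda>(i, j). K $$ (Suc i, Suc j))"
  show ?thesis
  proof
    show "M' \<in> carrier_mat n n" unfolding M'_def by simp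
    show "M'\<^sup>T = M'"
    proof (rule eq_matI)
      fix i j assume "i < dim_row M'" "j < dim_col M'"
      thus "M'\<^sup>T $$ (i, j) = M' $$ (i, j)"
        unfolding M'_def using arg_cong[OF K_sym, of "\<lambda>X. X $$ (Suc i, Suc j)"] K by auto
    qed (simp_all add: M'_def)
    show "W\<^sup>T * M * W = four_block_mat (mat 1 1 (\<lambda>_. e)) (0\<^sub>m 1 n) (0\<^sub>m n 1) M'"
      unfolding K_def[symmetric]
    proof (rule eq_matI)
      fix i j assume "i < dim_row (four_block_mat (mat 1 1 (\<lambda>_. e)) (0\<^sub>m 1 n) (0\<^sub>m n 1) M')"
        and "j < dim_col (four_block_mat (mat 1 1 (\<lambda>_. e)) (0\<^sub>m 1 n) (0\<^sub>m n 1) M')"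
      hence ij: "i < Suc n" "j < Suc n" unfolding M'_def by auto
      show "K $$ (i, j) = four_block_mat (mat 1 1 (\<lambda>_. e)) (0\<^sub>m 1 n) (0\<^sub>m n 1) M' $$ (i, j)"
        using K_col0 K_row0 ij unfolding M'_def by (cases i; cases j) auto
    qed (use K in \<open>auto simp: M'_def\<close>)
  qed
qed

theorem real_symmetric_spectral_decomp:
  fixes M :: "real mat"
  assumes "M \<in> carrier_mat n n" and "M\<^sup>T = M"
  shows "\<exists>U D. spectral_decomp n M U D"
  using assms
proof (induction n arbitrary: M)
  case 0
  have "spectral_decomp 0 M (1\<^sub>m 0) M"
    using 0 unfolding spectral_decomp_def diagonal_mat_def by (auto intro: eq_matI)
  thus ?case by blast
next
  case (Suc n)
  obtain e v where v: "v \<in> carrier_vec (Suc n)" "v \<bullet> v = 1" "M *\<^sub>v v = e \<cdot>\<^sub>v v"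
    using real_symmetric_unit_eigenvector[OF Suc.prems] by blast
  obtain W where W: "W \<in> carrier_mat (Suc n) (Suc n)" "W\<^sup>T * W = 1\<^sub>m (Suc n)" "col W 0 = v"
    using orthonormal_completion[OF v(1,2)] by blast
  obtain M' where M': "M' \<in> carrier_mat n n" "M'\<^sup>T = M'"
    "W\<^sup>T * M * W = four_block_mat (mat 1 1 (\<lambda>_. e)) (0\<^sub>m 1 n) (0\<^sub>m n 1) M'"
    using orthogonal_deflation[OF Suc.prems W(1,2)] v(3) W(3) by blast
  obtain U' D' where "spectral_decomp n M' U' D'" using Suc.IH[OF M'(1,2)] by blast
  moreover have "spectral_decomp 1 (mat 1 1 (\<lambda>_. e)) (1\<^sub>m 1) (mat 1 1 (\<lambda>_. e))"
    unfolding spectral_decomp_def diagonal_mat_def by (auto intro!: eq_matI)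
  ultimately have "spectral_decomp (Suc n) (W\<^sup>T * M * W) (four_block_mat (1\<^sub>m 1) (0\<^sub>m 1 n) (0\<^sub>m n 1) U')
      (four_block_mat (mat 1 1 (\<lambda>_. e)) (0\<^sub>m 1 n) (0\<^sub>m n 1) D')"
    unfolding M'(3) using spectral_decomp_four_block by fastforce
  note spectral_decomp_orthogonal_conj[OF this W(1,2)]
  moreover have "W * (W\<^sup>T * M * W) * W\<^sup>T = M"
  proof -
    have WW': "W * W\<^sup>T = 1\<^sub>m (Suc n)" using mat_mult_left_right_inverse[OF _ W(1) W(2)] W(1) by auto
    have "W * (W\<^sup>T * M * W) * W\<^sup>T = (W * W\<^sup>T) * M * (W * W\<^sup>T)"
      using W(1) Suc.prems(1) by (simp add: assoc_mult_mat[of _ "Suc n" "Suc n" _ "Suc n" _ "Suc n"])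
    thus ?thesis unfolding WW' using Suc.prems(1) by simp
  qed
  ultimately show ?case by auto
qed

lemma orthogonal_mat_vec_cancel:
  fixes U :: "real mat"
  assumes U: "U \<in> carrier_mat n n" and UU: "U\<^sup>T * U = 1\<^sub>m n" and b: "b \<in> carrier_vec n"
  shows "U\<^sup>T *\<^sub>v (U *\<^sub>v b) = b"
proof -
  have "U\<^sup>T *\<^sub>v (U *\<^sub>v b) = (U\<^sup>T * U) *\<^sub>v b" using U b by (simp add: assoc_mult_mat_vec[of _ n n])
  thus ?thesis using UU b by simp
qed

lemma orthogonal_scalar_prod_self:
  fixes U :: "real mat"
  assumes U: "U \<in> carrier_mat n n" and UU: "U\<^sup>T * U = 1\<^sub>m n" and b: "b \<in> carrier_vec n"
  shows "(U *\<^sub>v b) \<bullet> (U *\<^sub>v b) = b \<bullet> b"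
  using transpose_vec_mult_scalar[OF U b, of "U *\<^sub>v b"] orthogonal_mat_vec_cancel[OF U UU b] U b
  by simp

lemma diagonal_mat_mult_vec:
  assumes D: "D \<in> carrier_mat n n" and dD: "diagonal_mat D" and b: "b \<in> carrier_vec n"
    and i: "i < n"
  shows "(D *\<^sub>v b) $ i = D $$ (i, i) * b $ i"
proof -
  have "(D *\<^sub>v b) $ i = (\<Sum>j\<in>{0..<n}. D $$ (i, j) * b $ j)"
    using D b i by (auto simp: scalar_prod_def)
  also have "\<dots> = (\<Sum>j\<in>{0..<n}. if j = i then D $$ (i, i) * b $ i else 0)"
    using dD D i unfolding diagonal_mat_def by (intro sum.cong) auto
  finally show ?thesis using i by simp
qed

lemma quadratic_form_spectral_decomp:
  assumes MUD: "spectral_decomp n M U D" and b: "b \<in> carrier_vec n"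
  shows "(U *\<^sub>v b) \<bullet> (M *\<^sub>v (U *\<^sub>v b)) = (\<Sum>i<n. D $$ (i, i) * (b $ i)\<^sup>2)"
proof -
  have U: "U \<in> carrier_mat n n" "U\<^sup>T * U = 1\<^sub>m n" and D: "D \<in> carrier_mat n n" "diagonal_mat D"
    and M: "M = U * D * U\<^sup>T"
    using MUD unfolding spectral_decomp_def by auto
  have "M *\<^sub>v (U *\<^sub>v b) = (U * D) *\<^sub>v (U\<^sup>T *\<^sub>v (U *\<^sub>v b))"
    unfolding M by (rule assoc_mult_mat_vec) (use U D b in auto)
  also have "\<dots> = U *\<^sub>v (D *\<^sub>v (U\<^sup>T *\<^sub>v (U *\<^sub>v b)))"
    by (rule assoc_mult_mat_vec) (use U D b in auto)
  also have "\<dots> = U *\<^sub>v (D *\<^sub>v b)" by (simp only: orthogonal_mat_vec_cancel[OF U b])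
  finally have "(U *\<^sub>v b) \<bullet> (M *\<^sub>v (U *\<^sub>v b)) = (U\<^sup>T *\<^sub>v (U *\<^sub>v b)) \<bullet> (D *\<^sub>v b)"
    using transpose_vec_mult_scalar[of U n n "D *\<^sub>v b" "U *\<^sub>v b"] U D b by simp
  also have "\<dots> = b \<bullet> (D *\<^sub>v b)" by (simp only: orthogonal_mat_vec_cancel[OF U b])
  also have "\<dots> = (\<Sum>i<n. D $$ (i, i) * (b $ i)\<^sup>2)"
    using b D diagonal_mat_mult_vec[OF D b]
    by (auto simp: scalar_prod_def lessThan_atLeast0 power2_eq_square mult_ac intro!: sum.cong)
  finally show ?thesis .
qed

lemma spectral_decomp_uminus:
  assumes "spectral_decomp n M U D"
  shows "spectral_decomp n (- M) U (- D)"
proof -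
  have U: "U \<in> carrier_mat n n" and D: "D \<in> carrier_mat n n" and M: "M = U * D * U\<^sup>T"
    using assms unfolding spectral_decomp_def by auto
  have "U * (- D) * U\<^sup>T = - M" unfolding M using U D by simp
  then show ?thesis using assms unfolding spectral_decomp_def diagonal_mat_def by auto
qed

lemma spectral_decomp_smult:
  assumes "spectral_decomp n M U D"
  shows "spectral_decomp n (c \<cdot>\<^sub>m M) U (c \<cdot>\<^sub>m D)"
proof -
  have U: "U \<in> carrier_mat n n" and D: "D \<in> carrier_mat n n" and M: "M = U * D * U\<^sup>T"
    using assms unfolding spectral_decomp_def by auto
  have "U * (c \<cdot>\<^sub>m D) * U\<^sup>T = c \<cdot>\<^sub>m M"
    unfolding M using U D by (simp add: mult_smult_distrib mult_smult_assoc_mat[of _ n n _ n])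
  thus ?thesis using assms unfolding spectral_decomp_def diagonal_mat_def by auto
qed

lemma det_spectral_decomp:
  assumes "spectral_decomp n M U D"
  shows "det M = (\<Prod>i<n. D $$ (i, i))"
proof -
  have U: "U \<in> carrier_mat n n" "U\<^sup>T * U = 1\<^sub>m n" and D: "D \<in> carrier_mat n n" "diagonal_mat D"
    and M: "M = U * D * U\<^sup>T"
    using assms unfolding spectral_decomp_def by auto
  have UtU: "det U * det U = 1"
    using det_mult[of "U\<^sup>T" n U] U(1) det_transpose[OF U(1)] U(2) by simp
  have "det M = det U * det D * det U"
    unfolding M using U D by (simp add: det_mult[of _ n] det_transpose)
  also have "\<dots> = det D" using UtU by (simp add: mult_ac)
  also have "det D = (\<Prod>i<n. D $$ (i, i))"
    using D by (subst det_upper_triangular)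
      (auto simp: diagonal_mat_def diag_mat_def lessThan_atLeast0 prod.distinct_set_conv_list[of "[0..<n]", symmetric])
  finally show ?thesis .
qed

section \<open>Counting negative eigenvalues\<close>

lemma order_prod_linear_factors:
  fixes x :: "'a :: idom"
  shows "order x (\<Prod>a\<leftarrow>ds. [:- a, 1:]) = count_list ds x"
proof (induction ds)
  case Nil
  thus ?case by (simp add: order_0I)
next
  case (Cons a ds)
  have "(\<Prod>a\<leftarrow>ds. [:- a, 1:]) \<noteq> 0" by (auto simp: prod_list_zero_iff)
  hence "[:- a, 1:] * (\<Prod>a\<leftarrow>ds. [:- a, 1:]) \<noteq> 0"
    using no_zero_divisors[of "[:- a, 1:]"] by (metis pCons_eq_0_iff zero_neq_one)
  hence "order x (\<Prod>a\<leftarrow>a # ds. [:- a, 1:]) = order x [:- a, 1:] + order x (\<Prod>a\<leftarrow>ds. [:- a, 1:])"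
    by (simp only: list.map prod_list.Cons) (rule order_mult)
  thus ?case using Cons by (simp add: order_linear')
qed

lemma neg_index_spectral_decomp:
  assumes MUD: "spectral_decomp n M U D"
  shows "neg_index M = card {i. i < n \<and> D $$ (i, i) < 0}"
proof -
  have M: "M \<in> carrier_mat n n" and U: "U \<in> carrier_mat n n" "U\<^sup>T * U = 1\<^sub>m n"
    and D: "D \<in> carrier_mat n n" "diagonal_mat D" and MD: "M = U * D * U\<^sup>T"
    using MUD unfolding spectral_decomp_def by auto
  have "U * U\<^sup>T = 1\<^sub>m n" using mat_mult_left_right_inverse[OF _ U] U by auto
  hence "similar_mat_wit M D U U\<^sup>T"
    unfolding similar_mat_wit_def Let_def using M U D MD by auto
  hence "similar_mat M D" unfolding similar_mat_def by blast
  moreover have "upper_triangular D" using D unfolding upper_triangular_def diagonal_mat_def by auto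
  ultimately have cp: "char_poly M = (\<Prod>a\<leftarrow>diag_mat D. [:- a, 1:])"
    using char_poly_similar char_poly_upper_triangular[OF D(1)] by metis
  define ds where "ds = diag_mat D"
  have eig: "eigenvalue M x \<longleftrightarrow> x \<in> set ds" for x
    unfolding eigenvalue_root_char_poly[OF M] cp ds_def poly_prod_list
    by (induction "diag_mat D") auto
  have "count_list (filter (\<lambda>x. x < 0) ds) x = count_list ds x" if "x < 0" for x
    using that by (induction ds) auto
  hence "neg_index M = (\<Sum>x\<in>{x. x < 0 \<and> x \<in> set ds}. count_list (filter (\<lambda>x. x < 0) ds) x)"
    unfolding neg_index_def eig cp ds_def[symmetric] order_prod_linear_factors by simp
  also have "\<dots> = length (filter (\<lambda>x. x < 0) ds)" by (rule sum_count_set) auto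
  also have "\<dots> = card {i. i < n \<and> D $$ (i, i) < 0}"
    unfolding length_filter_conv_card ds_def using D by (auto simp: diag_mat_def intro!: arg_cong[where f = card])
  finally show ?thesis .
qed

lemma neg_index_smult_pos:
  fixes M :: "real mat"
  assumes M: "M \<in> carrier_mat n n" "M\<^sup>T = M" and c: "c > 0"
  shows "neg_index (c \<cdot>\<^sub>m M) = neg_index M"
proof -
  obtain U D where MUD: "spectral_decomp n M U D" using real_symmetric_spectral_decomp[OF M] by blast
  have D: "D \<in> carrier_mat n n" using MUD unfolding spectral_decomp_def by auto
  have "{i. i < n \<and> (c \<cdot>\<^sub>m D) $$ (i, i) < 0} = {i. i < n \<and> D $$ (i, i) < 0}"
    using D c by (auto simp: mult_less_0_iff)
  thus ?thesis
    using neg_index_spectral_decomp[OF MUD] neg_index_spectral_decomp[OF spectral_decomp_smult[OF MUD]]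
    by simp
qed

lemma char_poly_nonzero: "A \<in> carrier_mat n n \<Longrightarrow> char_poly A \<noteq> 0"
  using degree_monic_char_poly[of A n] by auto

lemma char_poly_four_block_zero:
  fixes A :: "'a :: idom mat"
  assumes A: "A \<in> carrier_mat n n" and B: "B \<in> carrier_mat n m" and C: "C \<in> carrier_mat m m"
  shows "char_poly (four_block_mat A B (0\<^sub>m m n) C) = char_poly A * char_poly C"
proof -
  let ?cm = "\<lambda>A. [:0, 1:] \<cdot>\<^sub>m 1\<^sub>m (dim_row A) + map_mat (\<lambda>a. [:- a:]) A"
  have "?cm (four_block_mat A B (0\<^sub>m m n) C)
      = four_block_mat (?cm A) (map_mat (\<lambda>a. [:- a:]) B) (0\<^sub>m m n) (?cm C)"
    using A B C by (intro eq_matI) (auto simp: one_poly_def)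
  also have "det \<dots> = det (?cm A) * det (?cm C)"
    using A B C by (intro det_four_block_mat_lower_left_zero) auto
  finally show ?thesis unfolding char_poly_defs by simp
qed

lemma neg_index_eq_sum_order:
  fixes M :: "real mat"
  assumes M: "M \<in> carrier_mat n n" and S: "finite S" "S \<subseteq> {x. x < 0}"
    and roots: "{x. x < 0 \<and> poly (char_poly M) x = 0} \<subseteq> S"
  shows "neg_index M = (\<Sum>x\<in>S. order x (char_poly M))"
  unfolding neg_index_def eigenvalue_root_char_poly[OF M]
  using S roots char_poly_nonzero[OF M] by (intro sum.mono_neutral_left) (auto simp: order_root)

lemma neg_index_four_block_zero:
  fixes A C :: "real mat"
  assumes A: "A \<in> carrier_mat n n" and B: "B \<in> carrier_mat n m" and C: "C \<in> carrier_mat m m"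
  shows "neg_index (four_block_mat A B (0\<^sub>m m n) C) = neg_index A + neg_index C"
proof -
  let ?M = "four_block_mat A B (0\<^sub>m m n) C"
  have M: "?M \<in> carrier_mat (n + m) (n + m)" using A B C by simp
  have cp: "char_poly ?M = char_poly A * char_poly C" by (rule char_poly_four_block_zero[OF A B C])
  have nz: "char_poly A \<noteq> 0" "char_poly C \<noteq> 0" using char_poly_nonzero A C by auto
  define S where "S = {x. x < 0 \<and> poly (char_poly ?M) x = 0}"
  have S: "finite S" "S \<subseteq> {x. x < 0}"
    unfolding S_def using poly_roots_finite[OF char_poly_nonzero[OF M]] by auto
  have "neg_index ?M = (\<Sum>x\<in>S. order x (char_poly A) + order x (char_poly C))"
    using neg_index_eq_sum_order[OF M S] nz unfolding S_def cp by (simp add: order_mult)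
  also have "\<dots> = neg_index A + neg_index C"
  proof -
    have "{x. x < 0 \<and> poly (char_poly A) x = 0} \<subseteq> S" "{x. x < 0 \<and> poly (char_poly C) x = 0} \<subseteq> S"
      unfolding S_def cp by auto
    thus ?thesis using neg_index_eq_sum_order[OF A S] neg_index_eq_sum_order[OF C S] by (simp add: sum.distrib)
  qed
  finally show ?thesis .
qed

section \<open>Inertia bounds and local constancy of the index\<close>

lemma card_neg_diag_ge_neg_definite_dim:
  fixes M V :: "real mat"
  assumes MUD: "spectral_decomp n M U D" and V: "V \<in> carrier_mat n k"
    and neg: "\<And>a. a \<in> carrier_vec k \<Longrightarrow> a \<noteq> 0\<^sub>v k \<Longrightarrow> (V *\<^sub>v a) \<bullet> (M *\<^sub>v (V *\<^sub>v a)) < 0"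
  shows "k \<le> card {i. i < n \<and> D $$ (i, i) < 0}"
proof (rule ccontr)
  define T where "T = {i. i < n \<and> D $$ (i, i) < 0}"
  define ts where "ts = sorted_list_of_set T"
  have ts: "distinct ts" "set ts = T" "length ts = card T" "set ts \<subseteq> {..<n}"
    unfolding ts_def T_def by auto
  have U: "U \<in> carrier_mat n n" "U\<^sup>T * U = 1\<^sub>m n"
    using MUD unfolding spectral_decomp_def by auto
  assume "\<not> k \<le> card {i. i < n \<and> D $$ (i, i) < 0}"
  hence lt: "length ts < k" unfolding ts(3) T_def by simp
  have R: "(coord_embedding n ts)\<^sup>T * U\<^sup>T * V \<in> carrier_mat (length ts) k"
    using U(1) V coord_embedding_carrier[of n ts] by (auto intro!: mult_carrier_mat)
  obtain a where a: "a \<in> carrier_vec k" "a \<noteq> 0\<^sub>v k"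
    and Ra: "((coord_embedding n ts)\<^sup>T * U\<^sup>T * V) *\<^sub>v a = 0\<^sub>v (length ts)"
    using nontrivial_kernel_wide_mat[OF R lt] by blast
  define b where "b = U\<^sup>T *\<^sub>v (V *\<^sub>v a)"
  have b: "b \<in> carrier_vec n" unfolding b_def using U V a by simp
  have "U * U\<^sup>T = 1\<^sub>m n" using mat_mult_left_right_inverse[OF _ U] U by auto
  hence "V *\<^sub>v a = (U * U\<^sup>T) *\<^sub>v (V *\<^sub>v a)" using V a by simp
  also have "\<dots> = U *\<^sub>v b" unfolding b_def by (rule assoc_mult_mat_vec) (use U V a in auto)
  finally have Va: "V *\<^sub>v a = U *\<^sub>v b" .
  have b_T: "b $ i = 0" if "i \<in> T" for i
  proof -
    have "i \<in> set ts" using that ts(2) by simp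
    then obtain j where j: "j < length ts" "i = ts ! j" by (auto simp: in_set_conv_nth)
    have "(coord_embedding n ts)\<^sup>T *\<^sub>v b = ((coord_embedding n ts)\<^sup>T * U\<^sup>T * V) *\<^sub>v a"
    proof -
      have E: "(coord_embedding n ts :: real mat)\<^sup>T \<in> carrier_mat (length ts) n" by simp
      have Ut: "U\<^sup>T \<in> carrier_mat n n" using U by simp
      have "((coord_embedding n ts)\<^sup>T * U\<^sup>T * V) *\<^sub>v a = ((coord_embedding n ts)\<^sup>T * U\<^sup>T) *\<^sub>v (V *\<^sub>v a)"
        using assoc_mult_mat_vec[OF mult_carrier_mat[OF E Ut] V a(1)] .
      also have "\<dots> = (coord_embedding n ts)\<^sup>T *\<^sub>v b"
        unfolding b_def using assoc_mult_mat_vec[OF E Ut] V a by simp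
      finally show ?thesis by simp
    qed
    hence "((coord_embedding n ts)\<^sup>T *\<^sub>v b) $ j = 0" using Ra j by simp
    thus ?thesis using transpose_coord_embedding_mult_vec[OF ts(4) b j(1)] j(2) by simp
  qed
  have "0 \<le> D $$ (i, i) * (b $ i)\<^sup>2" if "i < n" for i
    using b_T[of i] that unfolding T_def by (cases "D $$ (i, i) < 0") auto
  hence "0 \<le> (\<Sum>i<n. D $$ (i, i) * (b $ i)\<^sup>2)" by (intro sum_nonneg) simp
  also have "\<dots> = (V *\<^sub>v a) \<bullet> (M *\<^sub>v (V *\<^sub>v a))"
    unfolding Va by (rule quadratic_form_spectral_decomp[OF MUD b, symmetric])
  also have "\<dots> < 0" by (rule neg[OF a])
  finally show False by simp
qed

lemma neg_index_ge_neg_definite_dim: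
  fixes M V :: "real mat"
  assumes M: "M \<in> carrier_mat n n" and sym: "M\<^sup>T = M" and V: "V \<in> carrier_mat n k"
    and neg: "\<And>a. a \<in> carrier_vec k \<Longrightarrow> a \<noteq> 0\<^sub>v k \<Longrightarrow> (V *\<^sub>v a) \<bullet> (M *\<^sub>v (V *\<^sub>v a)) < 0"
  shows "k \<le> neg_index M"
proof -
  obtain U D where MUD: "spectral_decomp n M U D" using real_symmetric_spectral_decomp[OF M sym] by blast
  show ?thesis
    using card_neg_diag_ge_neg_definite_dim[OF MUD V neg] neg_index_spectral_decomp[OF MUD] by simp
qed

lemma neg_index_le_pos_definite_codim:
  fixes M V :: "real mat"
  assumes M: "M \<in> carrier_mat n n" and sym: "M\<^sup>T = M" and V: "V \<in> carrier_mat n k"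
    and pos: "\<And>a. a \<in> carrier_vec k \<Longrightarrow> a \<noteq> 0\<^sub>v k \<Longrightarrow> (V *\<^sub>v a) \<bullet> (M *\<^sub>v (V *\<^sub>v a)) > 0"
  shows "neg_index M + k \<le> n"
proof -
  obtain U D where MUD: "spectral_decomp n M U D" using real_symmetric_spectral_decomp[OF M sym] by blast
  have "k \<le> card {i. i < n \<and> (- D) $$ (i, i) < 0}"
  proof (rule card_neg_diag_ge_neg_definite_dim[OF spectral_decomp_uminus[OF MUD] V])
    fix a :: "real vec" assume a: "a \<in> carrier_vec k" "a \<noteq> 0\<^sub>v k"
    thus "(V *\<^sub>v a) \<bullet> (- M *\<^sub>v (V *\<^sub>v a)) < 0" using pos[OF a] M V by simp
  qed
  also have "{i. i < n \<and> (- D) $$ (i, i) < 0} = {i. i < n \<and> D $$ (i, i) > 0}"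
    using MUD unfolding spectral_decomp_def by auto
  finally have "k \<le> card {i. i < n \<and> D $$ (i, i) > 0}" .
  moreover have "card {i. i < n \<and> D $$ (i, i) > 0} + card {i. i < n \<and> D $$ (i, i) < 0} \<le> n"
  proof -
    have "card {i. i < n \<and> D $$ (i, i) > 0} + card {i. i < n \<and> D $$ (i, i) < 0}
        = card ({i. i < n \<and> D $$ (i, i) > 0} \<union> {i. i < n \<and> D $$ (i, i) < 0})"
      by (rule card_Un_disjoint[symmetric]) auto
    also have "\<dots> \<le> card {..<n}" by (rule card_mono) auto
    finally show ?thesis by simp
  qed
  ultimately show ?thesis using neg_index_spectral_decomp[OF MUD] by simp
qed

lemma spectral_subspace_quadratic_form_ge:
  fixes M :: "real mat"
  assumes MUD: "spectral_decomp n M U D" and S: "S \<subseteq> {..<n}"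
    and ge: "\<And>i. i \<in> S \<Longrightarrow> \<delta> \<le> D $$ (i, i)"
  obtains V where "V \<in> carrier_mat n (card S)"
    "\<And>a. a \<in> carrier_vec (card S) \<Longrightarrow> (V *\<^sub>v a) \<bullet> (V *\<^sub>v a) = a \<bullet> a"
    "\<And>a. a \<in> carrier_vec (card S) \<Longrightarrow> \<delta> * (a \<bullet> a) \<le> (V *\<^sub>v a) \<bullet> (M *\<^sub>v (V *\<^sub>v a))"
proof
  define ss where "ss = sorted_list_of_set S"
  have fin: "finite S" using S finite_subset by blast
  have ss: "distinct ss" "set ss = S" "length ss = card S" "set ss \<subseteq> {..<n}"
    unfolding ss_def using fin S by auto
  have U: "U \<in> carrier_mat n n" "U\<^sup>T * U = 1\<^sub>m n"
    using MUD unfolding spectral_decomp_def by auto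
  have E: "(coord_embedding n ss :: real mat) \<in> carrier_mat n (card S)"
    using coord_embedding_carrier[of n ss] unfolding ss(3) .
  show "U * coord_embedding n ss \<in> carrier_mat n (card S)" using U E by simp
  fix a :: "real vec" assume a: "a \<in> carrier_vec (card S)"
  define b where "b = coord_embedding n ss *\<^sub>v a"
  have b: "b \<in> carrier_vec n" unfolding b_def using E a by simp
  have Va: "(U * coord_embedding n ss) *\<^sub>v a = U *\<^sub>v b" unfolding b_def using U E a by simp
  have "b \<bullet> b = ((coord_embedding n ss)\<^sup>T *\<^sub>v b) \<bullet> a"
    using transpose_vec_mult_scalar[OF E a b] by (simp add: b_def)
  also have "(coord_embedding n ss)\<^sup>T *\<^sub>v b = a"
    unfolding b_def using coord_embedding_left_inverse[OF ss(1,4)] a ss(3) by simp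
  finally have bb: "b \<bullet> b = a \<bullet> a" .
  thus "(U * coord_embedding n ss *\<^sub>v a) \<bullet> (U * coord_embedding n ss *\<^sub>v a) = a \<bullet> a"
    unfolding Va orthogonal_scalar_prod_self[OF U b] .
  have b_out: "b $ i = 0" if "i < n" "i \<notin> S" for i
    unfolding b_def using coord_embedding_mult_vec_outside[of a ss i n] a that ss(2,3) by simp
  have "\<delta> * (a \<bullet> a) = (\<Sum>i<n. \<delta> * (b $ i)\<^sup>2)"
    unfolding bb[symmetric] using b by (simp add: scalar_prod_def sum_distrib_left lessThan_atLeast0 power2_eq_square)
  also have "\<dots> \<le> (\<Sum>i<n. D $$ (i, i) * (b $ i)\<^sup>2)"
  proof (rule sum_mono)
    fix i assume "i \<in> {..<n}"
    thus "\<delta> * (b $ i)\<^sup>2 \<le> D $$ (i, i) * (b $ i)\<^sup>2"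
      using ge[of i] b_out[of i] by (cases "i \<in> S") (auto intro: mult_right_mono)
  qed
  also have "\<dots> = (U * coord_embedding n ss *\<^sub>v a) \<bullet> (M *\<^sub>v (U * coord_embedding n ss *\<^sub>v a))"
    unfolding Va by (rule quadratic_form_spectral_decomp[OF MUD b, symmetric])
  finally show "\<delta> * (a \<bullet> a) \<le> (U * coord_embedding n ss *\<^sub>v a) \<bullet> (M *\<^sub>v (U * coord_embedding n ss *\<^sub>v a))" .
qed

lemma neg_index_perturbation:
  fixes M M0 :: "real mat"
  assumes M0: "spectral_decomp n M0 U D" and \<delta>: "\<delta> > 0" "\<And>i. i < n \<Longrightarrow> \<delta> \<le> \<bar>D $$ (i, i)\<bar>"
    and M: "M \<in> carrier_mat n n" "M\<^sup>T = M"
    and close: "\<And>x. x \<in> carrier_vec n \<Longrightarrow> x \<noteq> 0\<^sub>v n \<Longrightarrow>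
      \<bar>x \<bullet> (M *\<^sub>v x) - x \<bullet> (M0 *\<^sub>v x)\<bar> < \<delta> * (x \<bullet> x)"
  shows "neg_index M = neg_index M0"
proof -
  define T where "T = {i. i < n \<and> D $$ (i, i) < 0}"
  define P where "P = {i. i < n \<and> D $$ (i, i) > 0}"
  have "card T + card P = card (T \<union> P)" unfolding T_def P_def by (rule card_Un_disjoint[symmetric]) auto
  also have "T \<union> P = {..<n}" unfolding T_def P_def using \<delta> by (force simp: linorder_neq_iff)
  finally have TP: "card T + card P = n" by simp
  have M0c: "M0 \<in> carrier_mat n n" and Dc: "D \<in> carrier_mat n n"
    using M0 unfolding spectral_decomp_def by auto
  have nonzero: "V *\<^sub>v a \<noteq> 0\<^sub>v n" if "V \<in> carrier_mat n k" "a \<in> carrier_vec k" "a \<noteq> 0\<^sub>v k"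
    and "(V *\<^sub>v a) \<bullet> (V *\<^sub>v a) = a \<bullet> a" for V :: "real mat" and a k
    using that conjugate_square_greater_0_vec[of a k] by auto
  have T_sub: "T \<subseteq> {..<n}" and P_sub: "P \<subseteq> {..<n}" unfolding T_def P_def by auto
  have T_ge: "\<delta> \<le> (- D) $$ (i, i)" if "i \<in> T" for i
    using that \<delta>(2)[of i] Dc unfolding T_def by auto
  have P_ge: "\<delta> \<le> D $$ (i, i)" if "i \<in> P" for i
    using that \<delta>(2)[of i] unfolding P_def by auto
  obtain V1 where V1: "V1 \<in> carrier_mat n (card T)"
    "\<And>a. a \<in> carrier_vec (card T) \<Longrightarrow> (V1 *\<^sub>v a) \<bullet> (V1 *\<^sub>v a) = a \<bullet> a"
    "\<And>a. a \<in> carrier_vec (card T) \<Longrightarrow> \<delta> * (a \<bullet> a) \<le> (V1 *\<^sub>v a) \<bullet> (- M0 *\<^sub>v (V1 *\<^sub>v a))"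
    using spectral_subspace_quadratic_form_ge[OF spectral_decomp_uminus[OF M0] T_sub T_ge] by blast
  have "card T \<le> neg_index M"
  proof (rule neg_index_ge_neg_definite_dim[OF M V1(1)])
    fix a :: "real vec" assume a: "a \<in> carrier_vec (card T)" "a \<noteq> 0\<^sub>v (card T)"
    let ?x = "V1 *\<^sub>v a"
    have "\<bar>?x \<bullet> (M *\<^sub>v ?x) - ?x \<bullet> (M0 *\<^sub>v ?x)\<bar> < \<delta> * (?x \<bullet> ?x)"
      using close nonzero[OF V1(1) a V1(2)[OF a(1)]] V1(1) a by simp
    thus "?x \<bullet> (M *\<^sub>v ?x) < 0" using V1(2,3)[OF a(1)] V1(1) a M0c by simp
  qed
  moreover obtain V2 where V2: "V2 \<in> carrier_mat n (card P)"
    "\<And>a. a \<in> carrier_vec (card P) \<Longrightarrow> (V2 *\<^sub>v a) \<bullet> (V2 *\<^sub>v a) = a \<bullet> a"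
    "\<And>a. a \<in> carrier_vec (card P) \<Longrightarrow> \<delta> * (a \<bullet> a) \<le> (V2 *\<^sub>v a) \<bullet> (M0 *\<^sub>v (V2 *\<^sub>v a))"
    using spectral_subspace_quadratic_form_ge[OF M0 P_sub P_ge] by blast
  have "neg_index M + card P \<le> n"
  proof (rule neg_index_le_pos_definite_codim[OF M V2(1)])
    fix a :: "real vec" assume a: "a \<in> carrier_vec (card P)" "a \<noteq> 0\<^sub>v (card P)"
    let ?x = "V2 *\<^sub>v a"
    have "\<bar>?x \<bullet> (M *\<^sub>v ?x) - ?x \<bullet> (M0 *\<^sub>v ?x)\<bar> < \<delta> * (?x \<bullet> ?x)"
      using close nonzero[OF V2(1) a V2(2)[OF a(1)]] V2(1) a by simp
    thus "?x \<bullet> (M *\<^sub>v ?x) > 0" using V2(2,3)[OF a(1)] by simp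
  qed
  ultimately show ?thesis using TP neg_index_spectral_decomp[OF M0] unfolding T_def by linarith
qed

lemma quadratic_form_bound:
  fixes Q :: "real mat"
  assumes Q: "Q \<in> carrier_mat n n" and x: "x \<in> carrier_vec n"
  shows "\<bar>x \<bullet> (Q *\<^sub>v x)\<bar> \<le> (\<Sum>i<n. \<Sum>j<n. \<bar>Q $$ (i, j)\<bar>) * (x \<bullet> x)"
proof -
  have sq: "(x $ k)\<^sup>2 \<le> x \<bullet> x" if "k < n" for k
    using that x member_le_sum[of k "{0..<n}" "\<lambda>k. (x $ k)\<^sup>2"]
    by (simp add: scalar_prod_def power2_eq_square)
  have xx: "\<bar>x $ i\<bar> * \<bar>x $ j\<bar> \<le> x \<bullet> x" if "i < n" "j < n" for i j
    using sum_squares_bound[of "\<bar>x $ i\<bar>" "\<bar>x $ j\<bar>"] sq[OF that(1)] sq[OF that(2)] by simp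
  have "\<bar>x \<bullet> (Q *\<^sub>v x)\<bar> = \<bar>\<Sum>i<n. \<Sum>j<n. Q $$ (i, j) * (x $ i * x $ j)\<bar>"
    using Q x by (simp add: scalar_prod_def sum_distrib_left lessThan_atLeast0 mult_ac)
  also have "\<dots> \<le> (\<Sum>i<n. \<Sum>j<n. \<bar>Q $$ (i, j) * (x $ i * x $ j)\<bar>)"
    by (rule order_trans[OF sum_abs sum_mono[OF sum_abs]])
  also have "\<dots> \<le> (\<Sum>i<n. \<Sum>j<n. \<bar>Q $$ (i, j)\<bar> * (x \<bullet> x))"
    using xx by (intro sum_mono) (simp add: abs_mult mult_left_mono)
  finally show ?thesis by (simp add: sum_distrib_right)
qed

lemma quadratic_form_affine:
  fixes P Q :: "'a :: comm_ring mat"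
  assumes P: "P \<in> carrier_mat n n" and Q: "Q \<in> carrier_mat n n" and x: "x \<in> carrier_vec n"
  shows "x \<bullet> ((P + s \<cdot>\<^sub>m Q) *\<^sub>v x) = x \<bullet> (P *\<^sub>v x) + s * (x \<bullet> (Q *\<^sub>v x))"
proof -
  have "(P + s \<cdot>\<^sub>m Q) *\<^sub>v x = P *\<^sub>v x + s \<cdot>\<^sub>v (Q *\<^sub>v x)"
    using P Q x by (intro eq_vecI) (auto simp: scalar_prod_def sum_distrib_left sum.distrib algebra_simps)
  thus ?thesis using P Q x by (simp add: scalar_prod_add_distrib[of _ n] scalar_prod_smult_distrib[of _ n])
qed

lemma neg_index_affine_family_const:
  fixes P Q :: "real mat"
  assumes P: "P \<in> carrier_mat n n" "P\<^sup>T = P" and Q: "Q \<in> carrier_mat n n" "Q\<^sup>T = Q"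
    and S: "connected S" and nonsing: "\<And>t. t \<in> S \<Longrightarrow> det (P + t \<cdot>\<^sub>m Q) \<noteq> 0"
    and s: "s \<in> S" and t: "t \<in> S"
  shows "neg_index (P + s \<cdot>\<^sub>m Q) = neg_index (P + t \<cdot>\<^sub>m Q)"
proof (rule connected_local_const[OF S s t, where f = "\<lambda>t. neg_index (P + t \<cdot>\<^sub>m Q)"])
  have family: "P + t \<cdot>\<^sub>m Q \<in> carrier_mat n n" "(P + t \<cdot>\<^sub>m Q)\<^sup>T = P + t \<cdot>\<^sub>m Q" for t
    using P Q transpose_add_smult_sym[OF P Q] by auto
  show "\<forall>t\<in>S. eventually (\<lambda>s. neg_index (P + t \<cdot>\<^sub>m Q) = neg_index (P + s \<cdot>\<^sub>m Q)) (at t within S)"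
  proof
    fix t0 assume t0: "t0 \<in> S"
    obtain U D where UD: "spectral_decomp n (P + t0 \<cdot>\<^sub>m Q) U D"
      using real_symmetric_spectral_decomp[OF family] by blast
    have "(\<Prod>i<n. D $$ (i, i)) \<noteq> 0" using nonsing[OF t0] det_spectral_decomp[OF UD] by simp
    hence D_nz: "D $$ (i, i) \<noteq> 0" if "i < n" for i using that by simp
    define \<delta> where "\<delta> = Min (insert 1 ((\<lambda>i. \<bar>D $$ (i, i)\<bar>) ` {..<n}))"
    have \<delta>: "\<delta> > 0" "\<And>i. i < n \<Longrightarrow> \<delta> \<le> \<bar>D $$ (i, i)\<bar>"
      unfolding \<delta>_def using D_nz by auto
    define K where "K = 1 + (\<Sum>i<n. \<Sum>j<n. \<bar>Q $$ (i, j)\<bar>)"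
    have K: "K > 0" unfolding K_def by (simp add: add_pos_nonneg sum_nonneg)
    show "eventually (\<lambda>s. neg_index (P + t0 \<cdot>\<^sub>m Q) = neg_index (P + s \<cdot>\<^sub>m Q)) (at t0 within S)"
      unfolding eventually_at
    proof (intro exI[of _ "\<delta> / K"] conjI ballI impI)
      show "\<delta> / K > 0" using \<delta> K by simp
      fix s assume "s \<in> S" and "s \<noteq> t0 \<and> dist s t0 < \<delta> / K"
      hence st: "\<bar>s - t0\<bar> * K < \<delta>" using K by (simp add: dist_real_def pos_less_divide_eq)
      show "neg_index (P + t0 \<cdot>\<^sub>m Q) = neg_index (P + s \<cdot>\<^sub>m Q)"
      proof (rule neg_index_perturbation[OF UD \<delta> family, symmetric])
        fix x :: "real vec" assume x: "x \<in> carrier_vec n" "x \<noteq> 0\<^sub>v n"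
        have xx: "x \<bullet> x > 0" using conjugate_square_greater_0_vec[OF x(1)] x(2) by simp
        have "\<bar>x \<bullet> ((P + s \<cdot>\<^sub>m Q) *\<^sub>v x) - x \<bullet> ((P + t0 \<cdot>\<^sub>m Q) *\<^sub>v x)\<bar> = \<bar>s - t0\<bar> * \<bar>x \<bullet> (Q *\<^sub>v x)\<bar>"
          unfolding quadratic_form_affine[OF P(1) Q(1) x(1)] by (simp add: abs_mult[symmetric] algebra_simps)
        also have "\<dots> \<le> \<bar>s - t0\<bar> * (K * (x \<bullet> x))"
          using quadratic_form_bound[OF Q(1) x(1)] xx unfolding K_def
          by (intro mult_left_mono) (auto simp: algebra_simps)
        also have "\<dots> < \<delta> * (x \<bullet> x)" using st xx by (simp add: mult.assoc[symmetric])
        finally show "\<bar>x \<bullet> ((P + s \<cdot>\<^sub>m Q) *\<^sub>v x) - x \<bullet> ((P + t0 \<cdot>\<^sub>m Q) *\<^sub>v x)\<bar> < \<delta> * (x \<bullet> x)" .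
      qed
    qed
  qed
qed

section \<open>The matrices J and T1\<close>

lemma dim_J_mat [simp]: "dim_row (J_mat N) = N + N" "dim_col (J_mat N) = N + N"
  unfolding J_mat_def by simp_all

lemma J_mat_carrier [simp]: "J_mat N \<in> carrier_mat (N + N) (N + N)"
  by (simp add: carrier_matI)

lemma J_mat_mult_J_mat: "J_mat N * J_mat N = - 1\<^sub>m (N + N)"
  unfolding J_mat_def by (subst mult_four_block_mat) (auto intro!: eq_matI)

lemma J_mat_mult_vec_twice:
  assumes "v \<in> carrier_vec (N + N)"
  shows "J_mat N *\<^sub>v (J_mat N *\<^sub>v v) = - (v :: real vec)"
  using assms assoc_mult_mat_vec[of "J_mat N" "N + N" "N + N" "J_mat N" "N + N" v]
  by (simp add: J_mat_mult_J_mat)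

lemma J_mat_transpose: "(J_mat N)\<^sup>T = - J_mat N"
  unfolding J_mat_def by (rule eq_matI) auto

lemma T1_carrier:
  "B \<in> carrier_mat (N + N) (N + N) \<Longrightarrow> T1 N B \<in> carrier_mat ((N + N) + (N + N)) ((N + N) + (N + N))"
  unfolding T1_def by simp

lemma T1_transpose:
  assumes "B \<in> carrier_mat (N + N) (N + N)" and "B\<^sup>T = B"
  shows "(T1 N B)\<^sup>T = T1 N B"
  using assms unfolding T1_def
  by (simp add: transpose_four_block_mat[of _ "N + N" "N + N" _ "N + N" _ "N + N"] J_mat_transpose transpose_uminus)

lemma T1_mult_append_vec:
  assumes B: "B \<in> carrier_mat (N + N) (N + N)" and x: "x \<in> carrier_vec (N + N)"
    and y: "y \<in> carrier_vec (N + N)"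
  shows "T1 N B *\<^sub>v (x @\<^sub>v y) = (J_mat N *\<^sub>v y - B *\<^sub>v x) @\<^sub>v (- (J_mat N *\<^sub>v x) - B *\<^sub>v y)"
proof -
  have J: "J_mat N \<in> carrier_mat (N + N) (N + N)" by simp
  have "T1 N B *\<^sub>v (x @\<^sub>v y) = ((- B) *\<^sub>v x + J_mat N *\<^sub>v y) @\<^sub>v ((- J_mat N) *\<^sub>v x + (- B) *\<^sub>v y)"
    unfolding T1_def using B J x y by (intro four_block_mat_mult_vec) auto
  also have "\<dots> = (J_mat N *\<^sub>v y - B *\<^sub>v x) @\<^sub>v (- (J_mat N *\<^sub>v x) - B *\<^sub>v y)"
    using B J x y by (intro arg_cong2[where f = append_vec] eq_vecI) auto
  finally show ?thesis .
qed

lemma T1_zero_quadratic_form: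
  fixes x y :: "real vec"
  assumes x: "x \<in> carrier_vec (N + N)" and y: "y \<in> carrier_vec (N + N)"
  shows "(x @\<^sub>v y) \<bullet> (T1 N (0\<^sub>m (N + N) (N + N)) *\<^sub>v (x @\<^sub>v y))
    = x \<bullet> (J_mat N *\<^sub>v y) - y \<bullet> (J_mat N *\<^sub>v x)"
proof -
  have Jx: "J_mat N *\<^sub>v x \<in> carrier_vec (N + N)" and Jy: "J_mat N *\<^sub>v y \<in> carrier_vec (N + N)"
    using mult_mat_vec_carrier[OF J_mat_carrier] x y by auto
  have "T1 N (0\<^sub>m (N + N) (N + N)) *\<^sub>v (x @\<^sub>v y) = (J_mat N *\<^sub>v y) @\<^sub>v (- (J_mat N *\<^sub>v x))"
    using T1_mult_append_vec[of "0\<^sub>m (N + N) (N + N)" N x y] x y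
    by (auto intro!: arg_cong2[where f = append_vec] eq_vecI)
  thus ?thesis using x y Jx Jy by (simp add: scalar_prod_append[of _ "N + N" _ "N + N"])
qed

lemma neg_index_T1_zero: "neg_index (T1 N (0\<^sub>m (N + N) (N + N))) = N + N"
proof -
  let ?n = "N + N" and ?J = "J_mat N" and ?T = "T1 N (0\<^sub>m (N + N) (N + N))"
  have T: "?T \<in> carrier_mat (?n + ?n) (?n + ?n)" "?T\<^sup>T = ?T"
    using T1_carrier T1_transpose[of "0\<^sub>m ?n ?n"] by auto
  have graph: "(1\<^sub>m ?n @\<^sub>r K) *\<^sub>v a = a @\<^sub>v (K *\<^sub>v a)"
    if "K \<in> carrier_mat ?n ?n" "a \<in> carrier_vec ?n" for K :: "real mat" and a
    using mat_mult_append[of "1\<^sub>m ?n" ?n ?n K ?n a] that by (simp add: one_mult_mat_vec)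
  have "?n \<le> neg_index ?T"
  proof (rule neg_index_ge_neg_definite_dim[OF T])
    show "1\<^sub>m ?n @\<^sub>r ?J \<in> carrier_mat (?n + ?n) ?n" by simp
    fix a :: "real vec" assume a: "a \<in> carrier_vec ?n" "a \<noteq> 0\<^sub>v ?n"
    have Ja: "?J *\<^sub>v a \<in> carrier_vec ?n" using mult_mat_vec_carrier[OF J_mat_carrier a(1)] .
    have "((1\<^sub>m ?n @\<^sub>r ?J) *\<^sub>v a) \<bullet> (?T *\<^sub>v ((1\<^sub>m ?n @\<^sub>r ?J) *\<^sub>v a)) = - (a \<bullet> a) - (?J *\<^sub>v a) \<bullet> (?J *\<^sub>v a)"
      unfolding graph[OF J_mat_carrier a(1)] T1_zero_quadratic_form[OF a(1) Ja]
      using J_mat_mult_vec_twice[OF a(1)] a(1) by simp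
    also have "\<dots> < 0"
      using conjugate_square_greater_0_vec[OF a(1)] a(2) conjugate_square_ge_0_vec[of "?J *\<^sub>v a"] by simp
    finally show "((1\<^sub>m ?n @\<^sub>r ?J) *\<^sub>v a) \<bullet> (?T *\<^sub>v ((1\<^sub>m ?n @\<^sub>r ?J) *\<^sub>v a)) < 0" .
  qed
  moreover have "neg_index ?T + ?n \<le> ?n + ?n"
  proof (rule neg_index_le_pos_definite_codim[OF T])
    show "1\<^sub>m ?n @\<^sub>r - ?J \<in> carrier_mat (?n + ?n) ?n" by simp
    fix a :: "real vec" assume a: "a \<in> carrier_vec ?n" "a \<noteq> 0\<^sub>v ?n"
    have Ja: "?J *\<^sub>v a \<in> carrier_vec ?n" using mult_mat_vec_carrier[OF J_mat_carrier a(1)] .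
    have "?J *\<^sub>v (- (?J *\<^sub>v a)) = - (?J *\<^sub>v (?J *\<^sub>v a))" using Ja by (intro eq_vecI) auto
    hence "((1\<^sub>m ?n @\<^sub>r - ?J) *\<^sub>v a) \<bullet> (?T *\<^sub>v ((1\<^sub>m ?n @\<^sub>r - ?J) *\<^sub>v a)) = a \<bullet> a + (?J *\<^sub>v a) \<bullet> (?J *\<^sub>v a)"
      unfolding graph[OF uminus_carrier_mat[OF J_mat_carrier] a(1)]
      using T1_zero_quadratic_form[of a N "- (?J *\<^sub>v a)"] J_mat_mult_vec_twice[OF a(1)] a(1) Ja by simp
    also have "\<dots> > 0"
      using conjugate_square_greater_0_vec[OF a(1)] a(2) conjugate_square_ge_0_vec[of "?J *\<^sub>v a"] by simp
    finally show "((1\<^sub>m ?n @\<^sub>r - ?J) *\<^sub>v a) \<bullet> (?T *\<^sub>v ((1\<^sub>m ?n @\<^sub>r - ?J) *\<^sub>v a)) > 0" .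
  qed
  ultimately show ?thesis by simp
qed

lemma eigenvalue_of_square_neg:
  fixes B :: "real mat"
  assumes B: "B \<in> carrier_mat n n" and x: "x \<in> carrier_vec n" "x \<noteq> 0\<^sub>v n"
    and BB: "B *\<^sub>v (B *\<^sub>v x) = (- (c * c)) \<cdot>\<^sub>v x"
  shows "eigenvalue (map_mat complex_of_real B) (\<i> * c) \<or> eigenvalue (map_mat complex_of_real B) (- (\<i> * c))"
proof -
  define Bc where "Bc = map_mat complex_of_real B"
  define xc where "xc = map_vec complex_of_real x"
  have Bc: "Bc \<in> carrier_mat n n" and xc: "xc \<in> carrier_vec n" "xc \<noteq> 0\<^sub>v n"
    unfolding Bc_def xc_def using B x of_real_hom.vec_hom_zero_iff by auto
  have "Bc *\<^sub>v (Bc *\<^sub>v xc) = map_vec complex_of_real (B *\<^sub>v (B *\<^sub>v x))"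
    unfolding Bc_def xc_def using B x by (simp add: of_real_hom.mult_mat_vec_hom)
  also have "\<dots> = (- (complex_of_real c * complex_of_real c)) \<cdot>\<^sub>v xc"
    unfolding BB xc_def by (simp add: of_real_hom.vec_hom_smult)
  finally have BBc: "Bc *\<^sub>v (Bc *\<^sub>v xc) = (- (complex_of_real c * complex_of_real c)) \<cdot>\<^sub>v xc" .
  \<comment> \<open>\<open>B\<^sup>2 + c\<^sup>2 = (B - \<i> c) (B + \<i> c)\<close>: either \<open>x\<close> or \<open>(B + \<i> c) x\<close> is an eigenvector.\<close>
  define w where "w = Bc *\<^sub>v xc + (\<i> * c) \<cdot>\<^sub>v xc"
  have w: "w \<in> carrier_vec n" unfolding w_def using Bc xc by simp
  show ?thesis
  proof (cases "w = 0\<^sub>v n")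
    case True
    have "Bc *\<^sub>v xc = (- (\<i> * c)) \<cdot>\<^sub>v xc"
    proof (rule eq_vecI)
      fix i assume "i < dim_vec ((- (\<i> * c)) \<cdot>\<^sub>v xc)"
      hence i: "i < n" using xc by simp
      have "(Bc *\<^sub>v xc) $ i + (\<i> * c) * xc $ i = 0"
        using arg_cong[OF True, of "\<lambda>v. v $ i"] i Bc xc unfolding w_def by simp
      thus "(Bc *\<^sub>v xc) $ i = ((- (\<i> * c)) \<cdot>\<^sub>v xc) $ i" using i xc by (simp add: eq_neg_iff_add_eq_0)
    qed (use Bc xc in simp)
    hence "eigenvalue Bc (- (\<i> * c))" unfolding eigenvalue_def eigenvector_def using Bc xc by auto
    thus ?thesis unfolding Bc_def by simp
  next
    case False
    have "Bc *\<^sub>v w = (\<i> * c) \<cdot>\<^sub>v w"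
    proof (rule eq_vecI)
      fix i assume "i < dim_vec ((\<i> * c) \<cdot>\<^sub>v w)"
      hence i: "i < n" using w by simp
      have "Bc *\<^sub>v w = Bc *\<^sub>v (Bc *\<^sub>v xc) + (\<i> * c) \<cdot>\<^sub>v (Bc *\<^sub>v xc)"
        unfolding w_def using Bc xc by (simp add: mult_add_distrib_mat_vec mult_mat_vec)
      hence "(Bc *\<^sub>v w) $ i = (\<i> * c) * ((Bc *\<^sub>v xc) $ i + (\<i> * c) * xc $ i)"
        unfolding BBc using i Bc xc by (simp add: algebra_simps)
      thus "(Bc *\<^sub>v w) $ i = ((\<i> * c) \<cdot>\<^sub>v w) $ i" unfolding w_def using i Bc xc by simp
    qed (use Bc w in simp)
    hence "eigenvalue Bc (\<i> * c)" unfolding eigenvalue_def eigenvector_def using Bc w False by auto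
    thus ?thesis unfolding Bc_def by simp
  qed
qed

lemma T1_smult_kernel:
  fixes A :: "real mat"
  assumes A: "A \<in> carrier_mat (N + N) (N + N)" and x: "x \<in> carrier_vec (N + N)"
    and y: "y \<in> carrier_vec (N + N)"
    and ker: "T1 N (l \<cdot>\<^sub>m A) *\<^sub>v (x @\<^sub>v y) = 0\<^sub>v ((N + N) + (N + N))"
  shows "y = (- l) \<cdot>\<^sub>v ((J_mat N * A) *\<^sub>v x)" and "x = l \<cdot>\<^sub>v ((J_mat N * A) *\<^sub>v y)"
proof -
  let ?n = "N + N" and ?J = "J_mat N"
  have Ax: "A *\<^sub>v x \<in> carrier_vec ?n" and Ay: "A *\<^sub>v y \<in> carrier_vec ?n"
    and Jx: "?J *\<^sub>v x \<in> carrier_vec ?n" and Jy: "?J *\<^sub>v y \<in> carrier_vec ?n"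
    using A x y mult_mat_vec_carrier[OF J_mat_carrier] by auto
  have "0\<^sub>v (?n + ?n) = 0\<^sub>v ?n @\<^sub>v (0\<^sub>v ?n :: real vec)" by (rule eq_vecI) auto
  hence "(?J *\<^sub>v y - l \<cdot>\<^sub>v (A *\<^sub>v x)) @\<^sub>v (- (?J *\<^sub>v x) - l \<cdot>\<^sub>v (A *\<^sub>v y)) = 0\<^sub>v ?n @\<^sub>v 0\<^sub>v ?n"
    using T1_mult_append_vec[of "l \<cdot>\<^sub>m A" N x y] ker A x y by (simp add: smult_mat_mult_vec[OF A])
  hence "?J *\<^sub>v y - l \<cdot>\<^sub>v (A *\<^sub>v x) = 0\<^sub>v ?n" "- (?J *\<^sub>v x) - l \<cdot>\<^sub>v (A *\<^sub>v y) = 0\<^sub>v ?n"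
    using Ax Ay Jx Jy by (simp_all add: append_vec_eq[of _ ?n])
  hence Jy_eq: "?J *\<^sub>v y = l \<cdot>\<^sub>v (A *\<^sub>v x)" and "- (?J *\<^sub>v x) = l \<cdot>\<^sub>v (A *\<^sub>v y)"
    using Ax Ay Jx Jy by (auto intro: diff_eq_zero_vec)
  hence "?J *\<^sub>v x = - (l \<cdot>\<^sub>v (A *\<^sub>v y))" by (metis uminus_uminus_vec)
  also have "\<dots> = (- l) \<cdot>\<^sub>v (A *\<^sub>v y)" by (intro eq_vecI) auto
  finally have Jx_eq: "?J *\<^sub>v x = (- l) \<cdot>\<^sub>v (A *\<^sub>v y)" .
  have "y = - (?J *\<^sub>v (?J *\<^sub>v y))" using J_mat_mult_vec_twice[OF y] y by simp
  also have "\<dots> = - (l \<cdot>\<^sub>v (?J *\<^sub>v (A *\<^sub>v x)))"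
    unfolding Jy_eq using Ax by (simp add: mult_mat_vec[OF J_mat_carrier])
  also have "\<dots> = (- l) \<cdot>\<^sub>v ((?J * A) *\<^sub>v x)"
    unfolding assoc_mult_mat_vec[OF J_mat_carrier A x] by (intro eq_vecI) auto
  finally show "y = (- l) \<cdot>\<^sub>v ((?J * A) *\<^sub>v x)" .
  have "x = - (?J *\<^sub>v (?J *\<^sub>v x))" using J_mat_mult_vec_twice[OF x] x by simp
  also have "\<dots> = - ((- l) \<cdot>\<^sub>v (?J *\<^sub>v (A *\<^sub>v y)))"
    unfolding Jx_eq using Ay by (simp add: mult_mat_vec[OF J_mat_carrier])
  also have "\<dots> = l \<cdot>\<^sub>v ((?J * A) *\<^sub>v y)"
    unfolding assoc_mult_mat_vec[OF J_mat_carrier A y] by (intro eq_vecI) auto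
  finally show "x = l \<cdot>\<^sub>v ((?J * A) *\<^sub>v y)" .
qed

lemma det_T1_smult_nonzero:
  fixes A :: "real mat" and \<beta> :: real
  assumes A: "A \<in> carrier_mat (N + N) (N + N)"
    and spec: "spectrum (map_mat complex_of_real (J_mat N * A)) = {\<beta> * \<i>, - (\<beta> * \<i>)}"
    and \<beta>: "\<beta> > 0" and l: "0 \<le> l" "l \<noteq> 1 / \<beta>"
  shows "det (T1 N (l \<cdot>\<^sub>m A)) \<noteq> 0"
proof
  let ?n = "N + N" and ?B = "J_mat N * A"
  have T: "T1 N (l \<cdot>\<^sub>m A) \<in> carrier_mat (?n + ?n) (?n + ?n)" using T1_carrier A by simp
  have B: "?B \<in> carrier_mat ?n ?n" using mult_carrier_mat[OF J_mat_carrier A] .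
  assume "det (T1 N (l \<cdot>\<^sub>m A)) = 0"
  then obtain z where z: "z \<in> carrier_vec (?n + ?n)" "z \<noteq> 0\<^sub>v (?n + ?n)"
    and Tz: "T1 N (l \<cdot>\<^sub>m A) *\<^sub>v z = 0\<^sub>v (?n + ?n)"
    using det_0_iff_vec_prod_zero_field[OF T] by auto
  define x where "x = vec_first z ?n"
  define y where "y = vec_last z ?n"
  have x: "x \<in> carrier_vec ?n" and y: "y \<in> carrier_vec ?n" unfolding x_def y_def by auto
  have z_xy: "z = x @\<^sub>v y" unfolding x_def y_def using vec_first_last_append[OF z(1)] by simp
  note ker = T1_smult_kernel[OF A x y Tz[unfolded z_xy]]
  have "x \<noteq> 0\<^sub>v ?n"
  proof
    assume "x = 0\<^sub>v ?n"
    hence "y = 0\<^sub>v ?n" using ker(1) B by (auto intro!: eq_vecI)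
    thus False using \<open>x = 0\<^sub>v ?n\<close> z(2) unfolding z_xy by (auto dest!: arg_cong[where f = dim_vec])
  qed
  moreover have "l \<noteq> 0" using ker(2) \<open>x \<noteq> 0\<^sub>v ?n\<close> B y by auto
  \<comment> \<open>Eliminating \<open>y\<close> from the two kernel equations gives \<open>B (B x) = - (1 / l)\<^sup>2 x\<close>.\<close>
  moreover have "?B *\<^sub>v (?B *\<^sub>v x) = (- (1 / l * (1 / l))) \<cdot>\<^sub>v x"
  proof -
    have "?B *\<^sub>v x = (- 1 / l) \<cdot>\<^sub>v y" using ker(1) \<open>l \<noteq> 0\<close> B x by (auto intro!: eq_vecI)
    hence "?B *\<^sub>v (?B *\<^sub>v x) = (- 1 / l) \<cdot>\<^sub>v (?B *\<^sub>v y)" using B y by (simp add: mult_mat_vec)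
    also have "?B *\<^sub>v y = (1 / l) \<cdot>\<^sub>v x" using ker(2) \<open>l \<noteq> 0\<close> B y by (auto intro!: eq_vecI)
    finally show ?thesis by (auto intro!: eq_vecI)
  qed
  ultimately have "eigenvalue (map_mat complex_of_real ?B) (\<i> * (1 / l))
      \<or> eigenvalue (map_mat complex_of_real ?B) (- (\<i> * (1 / l)))"
    using eigenvalue_of_square_neg[OF B x] by blast
  hence "\<i> * (1 / l) \<in> {\<beta> * \<i>, - (\<beta> * \<i>)} \<or> - (\<i> * (1 / l)) \<in> {\<beta> * \<i>, - (\<beta> * \<i>)}"
    unfolding spec[symmetric] spectrum_def by auto
  hence "1 / l = \<beta> \<or> 1 / l = - \<beta>" by (auto simp: complex_eq_iff)
  moreover have "1 / l > 0" using l(1) \<open>l \<noteq> 0\<close> by simp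
  ultimately have "1 / l = \<beta>" using \<beta> by linarith
  thus False using l(2) \<open>l \<noteq> 0\<close> \<beta> by (auto simp: field_simps)
qed

lemma det_nonzero_of_spectrum:
  fixes A :: "real mat" and \<beta> :: real
  assumes A: "A \<in> carrier_mat (N + N) (N + N)"
    and spec: "spectrum (map_mat complex_of_real (J_mat N * A)) = {\<beta> * \<i>, - (\<beta> * \<i>)}"
    and \<beta>: "\<beta> > 0"
  shows "det A \<noteq> 0"
proof
  assume "det A = 0"
  then obtain v where v: "v \<in> carrier_vec (N + N)" "v \<noteq> 0\<^sub>v (N + N)" "A *\<^sub>v v = 0\<^sub>v (N + N)"
    using det_0_iff_vec_prod_zero_field[OF A] by auto
  have "(J_mat N * A) *\<^sub>v v = J_mat N *\<^sub>v (A *\<^sub>v v)" using assoc_mult_mat_vec[OF J_mat_carrier A v(1)] .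
  also have "\<dots> = 0 \<cdot>\<^sub>v v" unfolding v(3) using v(1) by (intro eq_vecI) auto
  finally have "eigenvalue (J_mat N * A) 0"
    unfolding eigenvalue_def eigenvector_def using mult_carrier_mat[OF J_mat_carrier A] v by auto
  hence "0 \<in> spectrum (map_mat complex_of_real (J_mat N * A))"
    using of_real_hom.eigenvalue_hom[OF mult_carrier_mat[OF J_mat_carrier A]] unfolding spectrum_def by force
  thus False unfolding spec using \<beta> by (auto simp: complex_eq_iff)
qed

abbreviation block_diag_neg :: "real mat \<Rightarrow> nat \<Rightarrow> real mat" where
  "block_diag_neg A n \<equiv> four_block_mat (- A) (0\<^sub>m n n) (0\<^sub>m n n) (- A)"

lemma T1_smult_affine:
  assumes A: "A \<in> carrier_mat (N + N) (N + N)"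
  shows "T1 N (l \<cdot>\<^sub>m A) = T1 N (0\<^sub>m (N + N) (N + N)) + l \<cdot>\<^sub>m block_diag_neg A (N + N)"
  using A unfolding T1_def by (intro eq_matI) auto

lemma block_diag_neg_carrier_sym:
  assumes A: "A \<in> carrier_mat n n" and sym: "A\<^sup>T = A"
  shows "block_diag_neg A n \<in> carrier_mat (n + n) (n + n)" and "(block_diag_neg A n)\<^sup>T = block_diag_neg A n"
  using A sym transpose_four_block_mat[OF uminus_carrier_mat[OF A] zero_carrier_mat zero_carrier_mat
      uminus_carrier_mat[OF A]]
  by (auto simp: transpose_uminus)

lemma det_block_diag_neg_plus_T1_nonzero:
  fixes A :: "real mat" and \<beta> :: real
  assumes A: "A \<in> carrier_mat (N + N) (N + N)"
    and spec: "spectrum (map_mat complex_of_real (J_mat N * A)) = {\<beta> * \<i>, - (\<beta> * \<i>)}"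
    and \<beta>: "\<beta> > 0" and \<mu>: "0 \<le> \<mu>" "\<mu> < \<beta>"
  shows "det (block_diag_neg A (N + N) + \<mu> \<cdot>\<^sub>m T1 N (0\<^sub>m (N + N) (N + N))) \<noteq> 0"
proof (cases "\<mu> = 0")
  case True
  have "- A = (- 1) \<cdot>\<^sub>m A" by (intro eq_matI) auto
  hence "det (- A) \<noteq> 0" using det_nonzero_of_spectrum[OF A spec \<beta>] det_smult[of "- 1" A] by simp
  moreover have "det (block_diag_neg A (N + N)) = det (- A) * det (- A)"
    using A by (intro det_four_block_mat_lower_left_zero) auto
  moreover have "block_diag_neg A (N + N) + 0 \<cdot>\<^sub>m T1 N (0\<^sub>m (N + N) (N + N)) = block_diag_neg A (N + N)"
    using add_zero_smult_mat[OF _ T1_carrier] A by simp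
  ultimately show ?thesis using True by simp
next
  case False
  hence \<mu>_pos: "\<mu> > 0" using \<mu>(1) by simp
  have "block_diag_neg A (N + N) + \<mu> \<cdot>\<^sub>m T1 N (0\<^sub>m (N + N) (N + N)) = \<mu> \<cdot>\<^sub>m T1 N ((1 / \<mu>) \<cdot>\<^sub>m A)"
    unfolding T1_smult_affine[OF A] using add_smult_mat_rescale[OF _ T1_carrier] A \<mu>_pos by simp
  moreover have "det (T1 N ((1 / \<mu>) \<cdot>\<^sub>m A)) \<noteq> 0"
    using det_T1_smult_nonzero[OF A spec \<beta>, of "1 / \<mu>"] \<mu> \<mu>_pos \<beta> by (auto simp: field_simps)
  ultimately show ?thesis using \<mu>_pos by simp
qed

lemma neg_index_T1_below_threshold:
  fixes A :: "real mat" and \<beta> :: real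
  assumes A: "A \<in> carrier_mat (N + N) (N + N)" "A\<^sup>T = A"
    and spec: "spectrum (map_mat complex_of_real (J_mat N * A)) = {\<beta> * \<i>, - (\<beta> * \<i>)}"
    and \<beta>: "\<beta> > 0" and l: "0 \<le> l" "l < 1 / \<beta>"
  shows "neg_index (T1 N (l \<cdot>\<^sub>m A)) = N + N"
proof -
  let ?P = "T1 N (0\<^sub>m (N + N) (N + N))" and ?Q = "block_diag_neg A (N + N)"
  have P: "?P \<in> carrier_mat ((N + N) + (N + N)) ((N + N) + (N + N))" "?P\<^sup>T = ?P"
    using T1_carrier T1_transpose[of "0\<^sub>m (N + N) (N + N)"] by auto
  note Q = block_diag_neg_carrier_sym[OF A]
  have "neg_index (?P + l \<cdot>\<^sub>m ?Q) = neg_index (?P + 0 \<cdot>\<^sub>m ?Q)"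
    using det_T1_smult_nonzero[OF A(1) spec \<beta>] l \<beta>
    by (intro neg_index_affine_family_const[OF P Q, of "{0..<1 / \<beta>}"])
      (auto simp: T1_smult_affine[OF A(1), symmetric])
  also have "?P + 0 \<cdot>\<^sub>m ?Q = ?P" using add_zero_smult_mat[OF P(1) Q(1)] .
  finally show ?thesis using neg_index_T1_zero T1_smult_affine[OF A(1)] by simp
qed

lemma neg_index_T1_above_threshold:
  fixes A :: "real mat" and \<beta> :: real
  assumes A: "A \<in> carrier_mat (N + N) (N + N)" "A\<^sup>T = A"
    and spec: "spectrum (map_mat complex_of_real (J_mat N * A)) = {\<beta> * \<i>, - (\<beta> * \<i>)}"
    and \<beta>: "\<beta> > 0" and l: "l > 1 / \<beta>"
  shows "neg_index (T1 N (l \<cdot>\<^sub>m A)) = 2 * neg_index (- A)"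
proof -
  let ?P = "T1 N (0\<^sub>m (N + N) (N + N))" and ?Q = "block_diag_neg A (N + N)"
  have P: "?P \<in> carrier_mat ((N + N) + (N + N)) ((N + N) + (N + N))" "?P\<^sup>T = ?P"
    using T1_carrier T1_transpose[of "0\<^sub>m (N + N) (N + N)"] by auto
  note Q = block_diag_neg_carrier_sym[OF A]
  have l_pos: "l > 0" using l \<beta> by (smt (verit) divide_pos_pos)
  \<comment> \<open>Dividing by \<open>l\<close> maps the parameters \<open>l > 1 / \<beta>\<close> to \<open>0 < 1 / l < \<beta>\<close> and adds the
    end point \<open>1 / l = 0\<close>, where the matrix is block diagonal.\<close>
  have "T1 N (l \<cdot>\<^sub>m A) = l \<cdot>\<^sub>m (?Q + (1 / l) \<cdot>\<^sub>m ?P)"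
    unfolding T1_smult_affine[OF A(1)] using add_smult_mat_rescale[OF P(1) Q(1)] l_pos by simp
  hence "neg_index (T1 N (l \<cdot>\<^sub>m A)) = neg_index (?Q + (1 / l) \<cdot>\<^sub>m ?P)"
    using neg_index_smult_pos[OF add_carrier_mat[OF smult_carrier_mat[OF P(1)]]
        transpose_add_smult_sym[OF Q P] l_pos] by simp
  also have "\<dots> = neg_index (?Q + 0 \<cdot>\<^sub>m ?P)"
    using det_block_diag_neg_plus_T1_nonzero[OF A(1) spec \<beta>] l l_pos \<beta>
    by (intro neg_index_affine_family_const[OF Q P, of "{0..<\<beta>}"]) (auto simp: field_simps)
  also have "?Q + 0 \<cdot>\<^sub>m ?P = ?Q" using add_zero_smult_mat[OF Q(1) P(1)] .
  also have "neg_index ?Q = 2 * neg_index (- A)"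
    using neg_index_four_block_zero[of "- A" "N + N" "0\<^sub>m (N + N) (N + N)" "N + N" "- A"] A by simp
  finally show ?thesis .
qed

theorem lemma4p2:
  fixes A :: "real mat" and N :: nat and \<beta>\<^sub>0 :: real
  assumes "A \<in> carrier_mat (2 * N) (2 * N)"
    and "transpose_mat A = A"
    and "\<beta>\<^sub>0 > 0"
    and "spectrum (map_mat complex_of_real (J_mat N * A)) = {\<beta>\<^sub>0 * \<i>, - (\<beta>\<^sub>0 * \<i>)}"
  shows "(\<forall>l::real. 0 \<le> l \<and> l < 1 / \<beta>\<^sub>0 \<longrightarrow> neg_index (T1 N (l \<cdot>\<^sub>m A)) = 2 * N)
       \<and> (\<forall>l::real. l > 1 / \<beta>\<^sub>0 \<longrightarrow> neg_index (T1 N (l \<cdot>\<^sub>m A)) = 2 * neg_index (- A))"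
proof -
  have A: "A \<in> carrier_mat (N + N) (N + N)" "A\<^sup>T = A" using assms(1,2) by (simp_all add: mult_2)
  show ?thesis
    using neg_index_T1_below_threshold[OF A assms(4,3)] neg_index_T1_above_threshold[OF A assms(4,3)]
    by (auto simp: mult_2)
qed

end
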